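(* Let $0<q\leq 1$, let $D\in\mathbb{R}^{n\times d}$ be a frame with frame bounds $0<\mathcal{L}\leq\mathcal{U}<\infty$, $\kappa=\mathcal{U}/\mathcal{L}$, let $A\in\mathbb{R}^{m\times n}$, and let $s<a$ be positive integers. Assume $A$ satisfies the $(D^{\dagger},q)$-RIP of order $s+a$ (with $(D^\dagger,q)$-RIP constants $\delta_a$ and $\delta_{s+a}<1$), and let $\Delta=\frac{1+\delta_a}{1-\delta_{s+a}}$. Let $h\in\mathbb{R}^n$ be arbitrary and let $T=T_0,T_1,T_2,\dots$ and $T_{01}=T_0\cup T_1$ be the index sets associated with $D^*h$ as described in the context. Then $$\|DD_{T_{01}}^*h\|_2^2\leq\kappa\,\mathcal{U}\,\Delta^{2/q}a^{1-2/q}\left(\|D_{T^c}^*h\|_q^q+\frac{\mathcal{L}^{q/2}a^{1-q/2}\|Ah\|_q^q}{1+\delta_a}\right)^{2/q}.$$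
   Context: $D$ is a frame with frame bounds $\mathcal{L},\mathcal{U}$ if $\mathcal{L}\|f\|_2^2\leq\|D^*f\|_2^2\leq\mathcal{U}\|f\|_2^2$ for all $f\in\mathbb{R}^n$; $D^{\dagger}=(DD^* )^{-1}D$. $A$ obeys the $(D^\dagger,q)$-RIP of order $k$ with constant $\delta\in[0,1)$ if $(1-\delta)\|D^\dagger v\|_2^q\leq\|AD^\dagger v\|_q^q\leq(1+\delta)\|D^\dagger v\|_2^q$ for all $v\in\mathbb{R}^d$ with at most $k$ nonzero entries; $\delta_k$ is the smallest such $\delta$. Index sets: write $D^*h=(x_1,\dots,x_d)^T$ and, after reordering indices, assume $|x_1|\geq|x_2|\geq\cdots\geq|x_d|$; set $T=T_0=\{1,\dots,s\}$, $T_1=\{s+1,\dots,s+a\}$, $T_i=\{s+(i-1)a+1,\dots,s+ia\}$ for $i\geq 2$ (the last one possibly of size less than $a$), $T_{01}=T_0\cup T_1$, and $T^c=[d]\setminus T$. For $S\subset[d]$, $D_S$ is the $n\times d$ matrix obtained from $D$ by setting the columns indexed outside $S$ to zero, so $D_S^*h$ is $D^*h$ restricted to $S$. *)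

theory Defs
  imports "HOL-Analysis.Analysis"
begin

text \<open>Vectors in R^k are modelled as real^'k (finite index type 'k); an n x d matrix
  is real^'d^'n. The adjoint D^* is the transpose.\<close>

definition qnorm_pow :: "real \<Rightarrow> real^'k \<Rightarrow> real" where
  "qnorm_pow q x = (\<Sum>i\<in>UNIV. \<bar>x $ i\<bar> powr q)"

definition is_frame :: "real^'d^'n \<Rightarrow> real \<Rightarrow> real \<Rightarrow> bool" where
  "is_frame D L U \<longleftrightarrow> 0 < L \<and> L \<le> U \<and>
     (\<forall>f::real^'n. L * (norm f)\<^sup>2 \<le> (norm (transpose D *v f))\<^sup>2 \<and>
                   (norm (transpose D *v f))\<^sup>2 \<le> U * (norm f)\<^sup>2)"

definition dagger :: "real^'d^'n \<Rightarrow> real^'d^'n" where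
  "dagger D = matrix_inv (D ** transpose D) ** D"

definition dq_RIP :: "real^'d^'n \<Rightarrow> real^'n^'m \<Rightarrow> real \<Rightarrow> nat \<Rightarrow> real \<Rightarrow> bool" where
  "dq_RIP D A q k \<delta> \<longleftrightarrow> 0 \<le> \<delta> \<and> \<delta> < 1 \<and>
     (\<forall>v::real^'d. card {i. v $ i \<noteq> 0} \<le> k \<longrightarrow>
        (1 - \<delta>) * (norm (dagger D *v v)) powr q \<le> qnorm_pow q (A *v (dagger D *v v)) \<and>
        qnorm_pow q (A *v (dagger D *v v)) \<le> (1 + \<delta>) * (norm (dagger D *v v)) powr q)"

definition rip_const :: "real^'d^'n \<Rightarrow> real^'n^'m \<Rightarrow> real \<Rightarrow> nat \<Rightarrow> real" where
  "rip_const D A q k = Inf {\<delta>. dq_RIP D A q k \<delta>}"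

text \<open>Restriction of a vector to an index set S (other entries set to 0);
  restr S (D^* h) = D_S^* h.\<close>
definition restr :: "'k set \<Rightarrow> real^'k \<Rightarrow> real^'k" where
  "restr S x = (\<chi> i. if i \<in> S then x $ i else 0)"

definition decreasing_order :: "real^'d \<Rightarrow> (nat \<Rightarrow> 'd) \<Rightarrow> bool" where
  "decreasing_order x \<sigma> \<longleftrightarrow> bij_betw \<sigma> {..<CARD('d)} UNIV \<and>
     (\<forall>i j. i \<le> j \<longrightarrow> j < CARD('d) \<longrightarrow> \<bar>x $ (\<sigma> j)\<bar> \<le> \<bar>x $ (\<sigma> i)\<bar>)"

end

theory Submission
  imports Defs
begin

text \<open>Put x = D^* h and let v be x restricted to T_01. Since D^\<dagger> D^* = I, we have
  A D^\<dagger> v = A h - \<Sum>_{j \<ge> 2} A D^\<dagger> x_{T_j}. The lower RIP bound for the (s+a)-sparse v,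
  the triangle inequality for ||.||_q^q, the upper RIP bound for the a-sparse blocks and
  ||D^\<dagger> w||_2 \<le> ||w||_2 / sqrt L give
  (1 - \<delta>_{s+a}) ||D^\<dagger> v||_2^q \<le> ||A h||_q^q + (1 + \<delta>_a) L^{-q/2} \<Sum>_{j \<ge> 2} ||x_{T_j}||_2^q.
  As |x| is non-increasing, every entry of T_{j+1} is, in q-th power, at most the mean over T_j,
  so ||x_{T_{j+1}}||_2^q \<le> a^{q/2-1} ||x_{T_j}||_q^q and the tail sum is at most
  a^{q/2-1} ||x_{T^c}||_q^q. Finally D v = D D^* D^\<dagger> v, hence ||D v||_2 \<le> U ||D^\<dagger> v||_2.\<close>

section \<open>Frames and the canonical dual frame\<close>

lemma frame_analysis_bounds:
  assumes "is_frame D L U"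
  shows "sqrt L * norm f \<le> norm (transpose D *v f)"
    and "norm (transpose D *v f) \<le> sqrt U * norm f"
proof -
  have L: "0 < L" and U: "0 < U" using assms by (auto simp: is_frame_def)
  have "L * (norm f)\<^sup>2 \<le> (norm (transpose D *v f))\<^sup>2"
    and "(norm (transpose D *v f))\<^sup>2 \<le> U * (norm f)\<^sup>2"
    using assms by (auto simp: is_frame_def)
  then have "sqrt (L * (norm f)\<^sup>2) \<le> norm (transpose D *v f)"
    and "norm (transpose D *v f) \<le> sqrt (U * (norm f)\<^sup>2)"
    by (metis real_sqrt_abs real_sqrt_le_mono abs_norm_cancel)+
  then show "sqrt L * norm f \<le> norm (transpose D *v f)"
    and "norm (transpose D *v f) \<le> sqrt U * norm f"
    using L U by (simp_all add: real_sqrt_mult)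
qed

lemma norm_frame_synthesis_le:
  assumes "is_frame D L U"
  shows "norm (D *v w) \<le> sqrt U * norm w"
proof -
  have "(norm (D *v w))\<^sup>2 = inner (transpose D *v (D *v w)) w"
    by (simp add: power2_norm_eq_inner dot_lmul_matrix)
  also have "\<dots> \<le> norm (transpose D *v (D *v w)) * norm w"
    by (rule norm_cauchy_schwarz)
  also have "\<dots> \<le> sqrt U * norm (D *v w) * norm w"
    by (intro mult_right_mono frame_analysis_bounds(2)[OF assms]) simp
  finally show ?thesis
    using assms by (cases "D *v w = 0") (auto simp: power2_eq_square is_frame_def)
qed

lemma matrix_inv_inverse:
  fixes M :: "'a::field^'n^'n"
  assumes "invertible M"
  shows "matrix_inv M ** M = mat 1" and "M ** matrix_inv M = mat 1"
  using someI_ex[OF assms[unfolded invertible_def]] by (auto simp: matrix_inv_def)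

lemma frame_gram_invertible:
  assumes "is_frame D L U"
  shows "invertible (D ** transpose D)"
proof -
  have L: "0 < L" using assms by (auto simp: is_frame_def)
  have "y = 0" if "(D ** transpose D) *v y = 0" for y
  proof -
    have "(norm (transpose D *v y))\<^sup>2 = inner y ((D ** transpose D) *v y)"
      by (simp only: power2_norm_eq_inner dot_lmul_matrix transpose_matrix_vector matrix_vector_mul_assoc[symmetric])
    then have "sqrt L * norm y \<le> 0"
      using that frame_analysis_bounds(1)[OF assms, of y] by simp
    then show "y = 0" using L by (simp add: mult_le_0_iff)
  qed
  then show ?thesis
    using matrix_left_invertible_ker invertible_left_inverse by blast
qed

lemma dagger_transpose_mult:
  assumes "is_frame D L U"
  shows "dagger D *v (transpose D *v h) = h"
  by (simp only: dagger_def matrix_vector_mul_assoc matrix_mul_assoc[symmetric]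
      matrix_inv_inverse(1)[OF frame_gram_invertible[OF assms]] matrix_vector_mul_lid)

lemma frame_gram_dagger:
  assumes "is_frame D L U"
  shows "D *v (transpose D *v (dagger D *v v)) = D *v v"
  by (simp only: dagger_def matrix_vector_mul_assoc matrix_mul_assoc
      matrix_inv_inverse(2)[OF frame_gram_invertible[OF assms]] matrix_mul_lid)

lemma norm_dagger_le:
  assumes "is_frame D L U"
  shows "norm (dagger D *v v) \<le> norm v / sqrt L"
proof -
  define y where "y = dagger D *v v"
  have L: "0 < L" using assms by (auto simp: is_frame_def)
  have "(norm (transpose D *v y))\<^sup>2 = inner y (D *v (transpose D *v y))"
    by (simp only: power2_norm_eq_inner dot_lmul_matrix transpose_matrix_vector)
  also have "\<dots> = inner (transpose D *v y) v"
    by (simp only: y_def frame_gram_dagger[OF assms]) (simp add: dot_lmul_matrix)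
  also have "\<dots> \<le> norm (transpose D *v y) * norm v"
    by (rule norm_cauchy_schwarz)
  finally have "norm (transpose D *v y) \<le> norm v"
    by (cases "transpose D *v y = 0") (auto simp: power2_eq_square)
  then have "sqrt L * norm y \<le> norm v"
    using frame_analysis_bounds(1)[OF assms, of y] by linarith
  then show ?thesis
    using L by (simp add: y_def field_simps)
qed

lemma norm_synthesis_le_dagger:
  assumes "is_frame D L U"
  shows "norm (D *v v) \<le> U * norm (dagger D *v v)"
proof -
  have U: "0 < U" using assms by (auto simp: is_frame_def)
  have "norm (D *v v) = norm (D *v (transpose D *v (dagger D *v v)))"
    by (simp only: frame_gram_dagger[OF assms])
  also have "\<dots> \<le> sqrt U * norm (transpose D *v (dagger D *v v))"
    by (rule norm_frame_synthesis_le[OF assms])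
  also have "\<dots> \<le> sqrt U * (sqrt U * norm (dagger D *v v))"
    by (intro mult_left_mono frame_analysis_bounds(2)[OF assms]) (use U in simp)
  finally show ?thesis
    using U by (simp add: mult.assoc[symmetric])
qed

section \<open>The q-th power of the l_q quasinorm and RIP constants\<close>

lemma powr_add_le_add_powr:
  fixes a b q :: real
  assumes "0 \<le> a" "0 \<le> b" "0 < q" "q \<le> 1"
  shows "(a + b) powr q \<le> a powr q + b powr q"
proof (cases "a + b = 0")
  case True
  then show ?thesis using assms by simp
next
  case False
  then have s: "0 < a + b" using assms by simp
  have le_powr: "t \<le> t powr q" if "0 \<le> t" "t \<le> 1" for t :: real
    using powr_mono'[OF assms(4) that] that by simp
  have "a / (a + b) \<le> (a / (a + b)) powr q" "b / (a + b) \<le> (b / (a + b)) powr q"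
    using assms s by (auto intro!: le_powr)
  then have "(a + b) powr q * (a / (a + b) + b / (a + b))
      \<le> (a + b) powr q * ((a / (a + b)) powr q + (b / (a + b)) powr q)"
    by (intro mult_left_mono) auto
  also have "\<dots> = a powr q + b powr q"
    using assms s by (simp add: powr_divide distrib_left)
  finally show ?thesis
    using s by (simp add: add_divide_distrib[symmetric])
qed

lemma qnorm_pow_uminus [simp]: "qnorm_pow q (- x) = qnorm_pow q x"
  by (simp add: qnorm_pow_def)

lemma qnorm_pow_add_le:
  assumes "0 < q" "q \<le> 1"
  shows "qnorm_pow q (x + y) \<le> qnorm_pow q x + qnorm_pow q y"
  unfolding qnorm_pow_def sum.distrib[symmetric]
proof (rule sum_mono)
  fix i
  have "\<bar>(x + y) $ i\<bar> powr q \<le> (\<bar>x $ i\<bar> + \<bar>y $ i\<bar>) powr q"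
    using assms by (intro powr_mono2) (auto simp: abs_triangle_ineq)
  also have "\<dots> \<le> \<bar>x $ i\<bar> powr q + \<bar>y $ i\<bar> powr q"
    using assms by (intro powr_add_le_add_powr) auto
  finally show "\<bar>(x + y) $ i\<bar> powr q \<le> \<bar>x $ i\<bar> powr q + \<bar>y $ i\<bar> powr q" .
qed

lemma qnorm_pow_sum_le:
  assumes "0 < q" "q \<le> 1" "finite J"
  shows "qnorm_pow q (\<Sum>j\<in>J. f j) \<le> (\<Sum>j\<in>J. qnorm_pow q (f j))"
  using assms(3)
proof (induction J rule: finite_induct)
  case empty
  then show ?case by (simp add: qnorm_pow_def)
next
  case (insert j J)
  then show ?case
    using qnorm_pow_add_le[OF assms(1,2), of "f j" "sum f J"] by simp
qed

lemma dq_RIP_mono: "dq_RIP D A q k \<delta> \<Longrightarrow> k' \<le> k \<Longrightarrow> dq_RIP D A q k' \<delta>"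
  unfolding dq_RIP_def by (meson order_trans)

lemma dq_RIP_iff_abs:
  "dq_RIP D A q k \<delta> \<longleftrightarrow> 0 \<le> \<delta> \<and> \<delta> < 1 \<and>
     (\<forall>v. card {i. v $ i \<noteq> 0} \<le> k \<longrightarrow>
        \<bar>qnorm_pow q (A *v (dagger D *v v)) - norm (dagger D *v v) powr q\<bar>
          \<le> \<delta> * norm (dagger D *v v) powr q)"
  unfolding dq_RIP_def by (auto simp: abs_le_iff algebra_simps)

lemma le_cInf_mult:
  fixes S :: "real set"
  assumes "S \<noteq> {}" "bdd_below S" "0 \<le> n" "\<And>\<delta>. \<delta> \<in> S \<Longrightarrow> t \<le> \<delta> * n"
  shows "t \<le> Inf S * n"
proof (cases "n = 0")
  case True
  then show ?thesis using assms by auto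
next
  case False
  then have "t / n \<le> Inf S"
    using assms by (intro cInf_greatest) (auto simp: divide_le_eq)
  then show ?thesis
    using False assms(3) by (simp add: divide_le_eq)
qed

lemma dq_RIP_rip_const:
  assumes "dq_RIP D A q k \<delta>"
  shows "dq_RIP D A q k (rip_const D A q k)"
proof -
  let ?S = "{\<delta>. dq_RIP D A q k \<delta>}"
  have ne: "?S \<noteq> {}" and bdd: "bdd_below ?S"
    using assms by (auto simp: dq_RIP_def intro: bdd_belowI[of _ 0])
  have "0 \<le> Inf ?S"
    using ne by (intro cInf_greatest) (auto simp: dq_RIP_def)
  moreover have "Inf ?S < 1"
    using cInf_lower[OF _ bdd, of \<delta>] assms by (auto simp: dq_RIP_def)
  moreover have "\<bar>qnorm_pow q (A *v (dagger D *v v)) - norm (dagger D *v v) powr q\<bar>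
      \<le> Inf ?S * norm (dagger D *v v) powr q" if "card {i. v $ i \<noteq> 0} \<le> k" for v
    using that by (intro le_cInf_mult[OF ne bdd]) (auto simp: dq_RIP_iff_abs)
  ultimately show ?thesis
    by (simp add: dq_RIP_iff_abs rip_const_def)
qed

section \<open>Blocks of the non-increasing rearrangement\<close>

text \<open>Positions, in the order given by \<sigma>, of the paper's T_{j+1}, cut off at N: block s a N 0 is
  T_1 and block s a N j is T_{j+1} for j \<ge> 1.\<close>

definition block :: "nat \<Rightarrow> nat \<Rightarrow> nat \<Rightarrow> nat \<Rightarrow> nat set" where
  "block s a N j = {s + j * a..<s + (j + 1) * a} \<inter> {..<N}"

lemma mem_block_iff:
  assumes "0 < a"
  shows "k \<in> block s a N j \<longleftrightarrow> k < N \<and> s \<le> k \<and> (k - s) div a = j"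
proof -
  have div_eq_iff: "j * a \<le> d \<and> d < (j + 1) * a \<longleftrightarrow> d div a = j" for d
  proof
    assume "j * a \<le> d \<and> d < (j + 1) * a"
    then show "d div a = j" by (intro div_nat_eqI) (auto simp: mult.commute)
  next
    assume j: "d div a = j"
    have "d div a * a + d mod a = d" "d mod a < a"
      using assms by simp_all
    then show "j * a \<le> d \<and> d < (j + 1) * a"
      unfolding j distrib_right by linarith
  qed
  have "k \<in> block s a N j \<longleftrightarrow> k < N \<and> s + j * a \<le> k \<and> k < s + (j + 1) * a"
    by (auto simp: block_def)
  also have "\<dots> \<longleftrightarrow> k < N \<and> s \<le> k \<and> j * a \<le> k - s \<and> k - s < (j + 1) * a"
    by (cases "s \<le> k") auto
  also have "\<dots> \<longleftrightarrow> k < N \<and> s \<le> k \<and> (k - s) div a = j"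
    by (simp only: div_eq_iff conj_assoc)
  finally show ?thesis .
qed

lemma block_subset_lessThan: "block s a N j \<subseteq> {..<N}"
  by (auto simp: block_def)

lemma card_block_le: "card (block s a N j) \<le> a"
proof -
  have "card (block s a N j) \<le> card {s + j * a..<s + (j + 1) * a}"
    unfolding block_def by (rule card_mono) auto
  then show ?thesis by simp
qed

lemma sum_blocks_le:
  fixes f :: "nat \<Rightarrow> real"
  assumes "0 < a" "\<And>k. 0 \<le> f k"
  shows "(\<Sum>j<M. \<Sum>k\<in>block s a N j. f k) \<le> (\<Sum>k\<in>{s..<N}. f k)"
proof -
  have "(\<Sum>j<M. \<Sum>k\<in>block s a N j. f k) = sum f (\<Union>j<M. block s a N j)"
    by (rule sum.UNION_disjoint[symmetric])
      (auto simp: mem_block_iff[OF assms(1)] intro: finite_subset[OF block_subset_lessThan])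
  also have "\<dots> \<le> (\<Sum>k\<in>{s..<N}. f k)"
    using assms by (intro sum_mono2) (auto simp: block_def)
  finally show ?thesis .
qed

lemma restr_image_nth:
  assumes "bij_betw \<sigma> {..<CARD('d)} (UNIV :: 'd::finite set)" "G \<subseteq> {..<CARD('d)}" "k < CARD('d)"
  shows "restr (\<sigma> ` G) x $ \<sigma> k = (if k \<in> G then x $ \<sigma> k else 0)"
  using assms by (auto simp: restr_def bij_betw_def inj_on_def)

lemma sum_restr_image:
  fixes x :: "real^'d"
  assumes bij: "bij_betw \<sigma> {..<CARD('d)} (UNIV :: 'd::finite set)" and G: "G \<subseteq> {..<CARD('d)}"
    and f0: "f 0 = 0"
  shows "(\<Sum>i\<in>UNIV. f (restr (\<sigma> ` G) x $ i)) = (\<Sum>k\<in>G. f (x $ \<sigma> k))"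
proof -
  have "(\<Sum>i\<in>UNIV. f (restr (\<sigma> ` G) x $ i)) = (\<Sum>k<CARD('d). f (restr (\<sigma> ` G) x $ \<sigma> k))"
    by (rule sum.reindex_bij_betw[OF bij, symmetric])
  also have "\<dots> = (\<Sum>k<CARD('d). if k \<in> G then f (x $ \<sigma> k) else 0)"
    by (intro sum.cong) (auto simp: restr_image_nth[OF bij G] f0)
  also have "\<dots> = (\<Sum>k\<in>G. f (x $ \<sigma> k))"
    using G by (simp add: sum.If_cases Int_absorb1)
  finally show ?thesis .
qed

lemma qnorm_pow_restr_image:
  assumes "bij_betw \<sigma> {..<CARD('d)} (UNIV :: 'd::finite set)" "G \<subseteq> {..<CARD('d)}" "0 < q"
  shows "qnorm_pow q (restr (\<sigma> ` G) (x :: real^'d)) = (\<Sum>k\<in>G. \<bar>x $ \<sigma> k\<bar> powr q)"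
  unfolding qnorm_pow_def using sum_restr_image[OF assms(1,2), of "\<lambda>t. \<bar>t\<bar> powr q"] by simp

lemma norm_restr_image_sq:
  assumes "bij_betw \<sigma> {..<CARD('d)} (UNIV :: 'd::finite set)" "G \<subseteq> {..<CARD('d)}"
  shows "(norm (restr (\<sigma> ` G) (x :: real^'d)))\<^sup>2 = (\<Sum>k\<in>G. (x $ \<sigma> k)\<^sup>2)"
  unfolding power2_norm_eq_inner inner_vec_def
  using sum_restr_image[OF assms, of "\<lambda>t. t * t"] by (simp add: power2_eq_square)

lemma card_nonzero_restr_image_le:
  assumes "finite G"
  shows "card {i. restr (\<sigma> ` G) x $ i \<noteq> 0} \<le> card G"
proof -
  have "card {i. restr (\<sigma> ` G) x $ i \<noteq> 0} \<le> card (\<sigma> ` G)"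
    using assms by (intro card_mono) (auto simp: restr_def)
  also have "\<dots> \<le> card G"
    using assms by (rule card_image_le)
  finally show ?thesis .
qed

lemma restr_block_decomposition:
  fixes x :: "real^'d"
  assumes bij: "bij_betw \<sigma> {..<CARD('d)} (UNIV :: 'd::finite set)" and a: "0 < a"
  shows "x = restr (\<sigma> ` {..<min (s + a) CARD('d)}) x
      + (\<Sum>j<CARD('d). restr (\<sigma> ` block s a CARD('d) (Suc j)) x)"
proof (subst vec_eq_iff, intro allI)
  let ?N = "CARD('d)"
  fix i
  obtain k where k: "k < ?N" "i = \<sigma> k"
    using bij by (metis UNIV_I bij_betw_iff_bijections lessThan_iff)
  have block: "k \<in> block s a ?N (Suc j) \<longleftrightarrow> s + a \<le> k \<and> j = (k - s) div a - 1" for j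
  proof -
    have "(k - s) div a = Suc j \<longleftrightarrow> 0 < (k - s) div a \<and> j = (k - s) div a - 1"
      by auto
    then show ?thesis
      using k(1) a by (auto simp: mem_block_iff div_greater_zero_iff)
  qed
  have tail: "(\<Sum>j<?N. restr (\<sigma> ` block s a ?N (Suc j)) x) $ \<sigma> k
      = (if s + a \<le> k then x $ \<sigma> k else 0)"
  proof (cases "s + a \<le> k")
    case True
    have "(k - s) div a - 1 < ?N"
      using k(1) div_le_dividend[of "k - s" a] by linarith
    then show ?thesis
      using True by (simp add: restr_image_nth[OF bij block_subset_lessThan k(1)] block)
  next
    case False
    then show ?thesis
      by (simp add: restr_image_nth[OF bij block_subset_lessThan k(1)] block)
  qed
  show "x $ i = (restr (\<sigma> ` {..<min (s + a) ?N}) x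
      + (\<Sum>j<?N. restr (\<sigma> ` block s a ?N (Suc j)) x)) $ i"
    unfolding k(2) vector_add_component tail
    using k(1) by (simp add: restr_image_nth[OF bij _ k(1)])
qed

lemma power2_powr_half:
  fixes t :: real
  assumes "0 \<le> t"
  shows "t powr q = (t\<^sup>2) powr (q / 2)"
proof -
  have "(t\<^sup>2) powr (q / 2) = (t powr 2) powr (q / 2)"
    using assms by (simp only: powr_numeral)
  also have "\<dots> = t powr q"
    by (simp add: powr_powr)
  finally show ?thesis ..
qed

lemma sum_sq_powr_le:
  fixes y :: "'a \<Rightarrow> real"
  assumes "finite K" "card K \<le> a" "0 < q" "0 \<le> m"
    and "\<And>k. k \<in> K \<Longrightarrow> 0 \<le> y k \<and> y k powr q \<le> m"
  shows "(\<Sum>k\<in>K. (y k)\<^sup>2) powr (q / 2) \<le> real a powr (q / 2) * m"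
proof -
  have "(y k)\<^sup>2 \<le> m powr (2 / q)" if "k \<in> K" for k
  proof -
    have "(y k)\<^sup>2 = (y k powr q) powr (2 / q)"
      using assms(3) assms(5)[OF that] by (simp add: powr_powr)
    also have "\<dots> \<le> m powr (2 / q)"
      using assms(3) assms(5)[OF that] by (intro powr_mono2) auto
    finally show ?thesis .
  qed
  then have "(\<Sum>k\<in>K. (y k)\<^sup>2) \<le> real a * m powr (2 / q)"
    using sum_bounded_above[of K "\<lambda>k. (y k)\<^sup>2"] assms(2)
    by (smt (verit) mult_right_mono of_nat_mono powr_ge_zero)
  then have "(\<Sum>k\<in>K. (y k)\<^sup>2) powr (q / 2) \<le> (real a * m powr (2 / q)) powr (q / 2)"
    using assms(3) by (intro powr_mono2) (auto intro: sum_nonneg)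
  also have "\<dots> = real a powr (q / 2) * m"
    using assms(3,4) by (simp add: powr_mult powr_powr)
  finally show ?thesis .
qed

text \<open>Every entry of the next block is, in q-th power, at most the mean over the current block.\<close>

lemma block_Suc_powr_le:
  fixes y :: "nat \<Rightarrow> real"
  assumes q: "0 < q" and a: "0 < a"
    and dec: "\<And>k k'. k \<le> k' \<Longrightarrow> k' < N \<Longrightarrow> y k' \<le> y k" and nonneg: "\<And>k. 0 \<le> y k"
  shows "(\<Sum>k\<in>block s a N (Suc j). (y k)\<^sup>2) powr (q / 2)
    \<le> real a powr (q / 2 - 1) * (\<Sum>k\<in>block s a N j. y k powr q)"
proof -
  define m where "m = (\<Sum>k\<in>block s a N j. y k powr q) / a"
  have "y k powr q \<le> m" if k: "k \<in> block s a N (Suc j)" for k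
  proof -
    have full: "block s a N j = {s + j * a..<s + (j + 1) * a}"
      using k by (auto simp: block_def)
    have "(\<Sum>k'\<in>block s a N j. y k powr q) \<le> (\<Sum>k'\<in>block s a N j. y k' powr q)"
      using k q by (intro sum_mono powr_mono2 dec nonneg) (auto simp: block_def)
    then show ?thesis
      using a by (simp add: m_def full field_simps)
  qed
  then have "(\<Sum>k\<in>block s a N (Suc j). (y k)\<^sup>2) powr (q / 2) \<le> real a powr (q / 2) * m"
    using q nonneg by (intro sum_sq_powr_le card_block_le)
      (auto simp: m_def intro!: finite_subset[OF block_subset_lessThan] divide_nonneg_nonneg sum_nonneg)
  also have "\<dots> = real a powr (q / 2 - 1) * (\<Sum>k\<in>block s a N j. y k powr q)"
    using a by (simp add: m_def powr_diff)
  finally show ?thesis .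
qed

lemma sum_tail_blocks_le:
  fixes x :: "real^'d"
  assumes ord: "decreasing_order x \<sigma>" and q: "0 < q" and a: "0 < a"
  shows "(\<Sum>j<CARD('d). norm (restr (\<sigma> ` block s a CARD('d) (Suc j)) x) powr q)
    \<le> real a powr (q / 2 - 1) * qnorm_pow q (restr (UNIV - \<sigma> ` {..<min s CARD('d)}) x)"
proof -
  let ?N = "CARD('d)"
  let ?y = "\<lambda>k. \<bar>x $ \<sigma> k\<bar>"
  have bij: "bij_betw \<sigma> {..<?N} UNIV"
    using ord by (simp add: decreasing_order_def)
  have tail_image: "UNIV - \<sigma> ` {..<min s ?N} = \<sigma> ` {s..<?N}"
  proof -
    have "\<sigma> ` {..<?N} - \<sigma> ` {..<min s ?N} = \<sigma> ` ({..<?N} - {..<min s ?N})"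
      using bij by (intro inj_on_image_set_diff[symmetric]) (auto simp: bij_betw_def)
    also have "{..<?N} - {..<min s ?N} = {s..<?N}"
      by auto
    finally show ?thesis
      using bij by (simp add: bij_betw_def)
  qed
  have "norm (restr (\<sigma> ` block s a ?N (Suc j)) x) powr q
      = ((norm (restr (\<sigma> ` block s a ?N (Suc j)) x))\<^sup>2) powr (q / 2)" for j
    by (rule power2_powr_half) simp
  also have "\<dots> j = (\<Sum>k\<in>block s a ?N (Suc j). (?y k)\<^sup>2) powr (q / 2)" for j
    by (simp add: norm_restr_image_sq[OF bij block_subset_lessThan])
  also have "\<dots> j \<le> real a powr (q / 2 - 1) * (\<Sum>k\<in>block s a ?N j. ?y k powr q)" for j
    using ord q a by (intro block_Suc_powr_le) (auto simp: decreasing_order_def)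
  finally have "(\<Sum>j<?N. norm (restr (\<sigma> ` block s a ?N (Suc j)) x) powr q)
      \<le> real a powr (q / 2 - 1) * (\<Sum>j<?N. \<Sum>k\<in>block s a ?N j. ?y k powr q)"
    by (simp add: sum_distrib_left sum_mono)
  also have "\<dots> \<le> real a powr (q / 2 - 1) * (\<Sum>k\<in>{s..<?N}. ?y k powr q)"
    using a by (intro mult_left_mono sum_blocks_le) auto
  also have "\<dots> = real a powr (q / 2 - 1) * qnorm_pow q (restr (UNIV - \<sigma> ` {..<min s ?N}) x)"
    unfolding tail_image by (subst qnorm_pow_restr_image[OF bij _ q]) auto
  finally show ?thesis .
qed

section \<open>The estimate on T_01\<close>

lemma rip_head_le:
  fixes D :: "real^'d^'n" and A :: "real^'n^'m" and u :: "'j \<Rightarrow> real^'d"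
  assumes fr: "is_frame D L U" and q: "0 < q" "q \<le> 1"
    and rip_k: "dq_RIP D A q k \<delta>\<^sub>k" and rip_a: "dq_RIP D A q a \<delta>\<^sub>a"
    and decomp: "transpose D *v h = v + (\<Sum>j\<in>J. u j)" and J: "finite J"
    and sparse_v: "card {i. v $ i \<noteq> 0} \<le> k"
    and sparse_u: "\<And>j. j \<in> J \<Longrightarrow> card {i. u j $ i \<noteq> 0} \<le> a"
  shows "(1 - \<delta>\<^sub>k) * norm (dagger D *v v) powr q
    \<le> qnorm_pow q (A *v h) + (1 + \<delta>\<^sub>a) / L powr (q / 2) * (\<Sum>j\<in>J. norm (u j) powr q)"
proof -
  let ?Au = "\<lambda>j. A *v (dagger D *v u j)"
  have L: "0 < L" and \<delta>\<^sub>a: "0 \<le> \<delta>\<^sub>a"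
    using fr rip_a by (auto simp: is_frame_def dq_RIP_def)
  have "h = dagger D *v (transpose D *v h)"
    by (rule dagger_transpose_mult[OF fr, symmetric])
  then have "A *v h = A *v (dagger D *v v) + (\<Sum>j\<in>J. ?Au j)"
    unfolding decomp
    by (simp only: matrix_vector_right_distrib linear_sum[OF matrix_vector_mul_linear])
  then have Av: "A *v (dagger D *v v) = A *v h + - (\<Sum>j\<in>J. ?Au j)"
    by (simp add: algebra_simps)
  have Au: "qnorm_pow q (?Au j) \<le> (1 + \<delta>\<^sub>a) / L powr (q / 2) * norm (u j) powr q" if "j \<in> J" for j
  proof -
    have "qnorm_pow q (?Au j) \<le> (1 + \<delta>\<^sub>a) * norm (dagger D *v u j) powr q"
      using rip_a sparse_u[OF that] by (simp add: dq_RIP_def)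
    also have "\<dots> \<le> (1 + \<delta>\<^sub>a) * (norm (u j) / sqrt L) powr q"
      using norm_dagger_le[OF fr] q \<delta>\<^sub>a by (intro mult_left_mono powr_mono2) auto
    also have "\<dots> = (1 + \<delta>\<^sub>a) / L powr (q / 2) * norm (u j) powr q"
      using L by (simp add: powr_divide powr_half_sqrt[symmetric] powr_powr)
    finally show ?thesis .
  qed
  have "(1 - \<delta>\<^sub>k) * norm (dagger D *v v) powr q \<le> qnorm_pow q (A *v (dagger D *v v))"
    using rip_k sparse_v by (simp add: dq_RIP_def)
  also have "\<dots> \<le> qnorm_pow q (A *v h) + qnorm_pow q (- (\<Sum>j\<in>J. ?Au j))"
    unfolding Av by (rule qnorm_pow_add_le[OF q])
  also have "\<dots> \<le> qnorm_pow q (A *v h) + (\<Sum>j\<in>J. qnorm_pow q (?Au j))"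
    using qnorm_pow_sum_le[OF q J] by simp
  also have "\<dots> \<le> qnorm_pow q (A *v h) + (1 + \<delta>\<^sub>a) / L powr (q / 2) * (\<Sum>j\<in>J. norm (u j) powr q)"
    using Au by (simp add: sum_distrib_left sum_mono)
  finally show ?thesis .
qed

lemma rescale_powr_bound:
  fixes a c e q L P Q R U w :: real
  assumes head: "e * P powr q \<le> Q + c / L powr (q / 2) * (a powr (q / 2 - 1) * R)"
    and q: "0 < q" and pos: "0 < a" "0 < c" "0 < e" "0 < L" "0 \<le> U" "0 \<le> P"
    and w: "0 \<le> w" "w \<le> U * P"
  shows "w\<^sup>2 \<le> U / L * U * (c / e) powr (2 / q) * a powr (1 - 2 / q)
    * (R + L powr (q / 2) * a powr (1 - q / 2) * Q / c) powr (2 / q)"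
proof -
  define W where "W = R + L powr (q / 2) * a powr (1 - q / 2) * Q / c"
  define \<alpha> where "\<alpha> = a powr (q / 2 - 1) / L powr (q / 2)"
  have "(q / 2 - 1) * (2 / q) = 1 - 2 / q" "q / 2 * (2 / q) = 1"
    using q by (simp_all add: field_simps)
  then have \<alpha>_powr: "\<alpha> powr (2 / q) = a powr (1 - 2 / q) / L"
    using pos by (simp add: \<alpha>_def powr_divide powr_powr)
  have "a powr (q / 2 - 1) * a powr (1 - q / 2) = 1"
    using pos by (simp add: powr_add [symmetric])
  then have "Q + c / L powr (q / 2) * (a powr (q / 2 - 1) * R) = e * (c / e * \<alpha> * W)"
    using pos by (simp add: W_def \<alpha>_def field_simps)
  then have P: "P powr q \<le> c / e * \<alpha> * W"
    using head pos by (simp add: pos_le_divide_eq mult.commute)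
  have "w\<^sup>2 \<le> (U * P)\<^sup>2"
    by (rule power_mono[OF w(2) w(1)])
  also have "\<dots> = U\<^sup>2 * (P powr q) powr (2 / q)"
    using q pos by (simp add: powr_powr power_mult_distrib)
  also have "\<dots> \<le> U\<^sup>2 * (c / e * \<alpha> * W) powr (2 / q)"
    using P q by (intro mult_left_mono powr_mono2) auto
  also have "\<dots> = U / L * U * (c / e) powr (2 / q) * a powr (1 - 2 / q) * W powr (2 / q)"
    unfolding powr_mult \<alpha>_powr by (simp add: power2_eq_square)
  finally show ?thesis
    unfolding W_def .
qed

theorem lemma2p6:
  fixes D :: "real^'d^'n" and A :: "real^'n^'m" and h :: "real^'n"
    and q L U :: real and s a :: nat and \<sigma> :: "nat \<Rightarrow> 'd"
  assumes "0 < q" and "q \<le> 1"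
    and "is_frame D L U"
    and "0 < s" and "s < a"
    and "\<exists>\<delta>. dq_RIP D A q (s + a) \<delta>"
    and "decreasing_order (transpose D *v h) \<sigma>"
  shows "(norm (D *v restr (\<sigma> ` {..<min (s + a) CARD('d)}) (transpose D *v h)))\<^sup>2
    \<le> (U / L) * U
       * ((1 + rip_const D A q a) / (1 - rip_const D A q (s + a))) powr (2 / q)
       * real a powr (1 - 2 / q)
       * (qnorm_pow q (restr (UNIV - \<sigma> ` {..<min s CARD('d)}) (transpose D *v h))
          + L powr (q / 2) * real a powr (1 - q / 2) * qnorm_pow q (A *v h)
            / (1 + rip_const D A q a)) powr (2 / q)"
proof -
  let ?N = "CARD('d)"
  note q = \<open>0 < q\<close> \<open>q \<le> 1\<close> and fr = \<open>is_frame D L U\<close>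
  define x where "x = transpose D *v h"
  define v where "v = restr (\<sigma> ` {..<min (s + a) ?N}) x"
  define u where "u j = restr (\<sigma> ` block s a ?N (Suc j)) x" for j
  have a: "0 < a" using \<open>s < a\<close> by simp
  obtain \<delta> where \<delta>: "dq_RIP D A q (s + a) \<delta>" using assms(6) by blast
  have rip_k: "dq_RIP D A q (s + a) (rip_const D A q (s + a))"
    by (rule dq_RIP_rip_const[OF \<delta>])
  have rip_a: "dq_RIP D A q a (rip_const D A q a)"
    by (rule dq_RIP_rip_const[OF dq_RIP_mono[OF \<delta>]]) simp
  have \<delta>\<^sub>k: "rip_const D A q (s + a) < 1" and \<delta>\<^sub>a: "0 \<le> rip_const D A q a"
    using rip_k rip_a by (auto simp: dq_RIP_def)
  have L: "0 < L" "0 \<le> U"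
    using fr by (auto simp: is_frame_def)
  have ord: "decreasing_order x \<sigma>" and bij: "bij_betw \<sigma> {..<?N} UNIV"
    using assms(7) by (simp_all add: x_def decreasing_order_def)
  have "(1 - rip_const D A q (s + a)) * norm (dagger D *v v) powr q
      \<le> qnorm_pow q (A *v h) + (1 + rip_const D A q a) / L powr (q / 2) * (\<Sum>j<?N. norm (u j) powr q)"
  proof (rule rip_head_le[OF fr q rip_k rip_a])
    show "transpose D *v h = v + (\<Sum>j<?N. u j)"
      unfolding x_def [symmetric] v_def u_def by (rule restr_block_decomposition[OF bij a])
    show "card {i. v $ i \<noteq> 0} \<le> s + a"
      using card_nonzero_restr_image_le[of "{..<min (s + a) ?N}" \<sigma> x] by (simp add: v_def)
    show "card {i. u j $ i \<noteq> 0} \<le> a" for j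
      using card_nonzero_restr_image_le card_block_le
      by (metis u_def order_trans finite_subset[OF block_subset_lessThan] finite_lessThan)
  qed simp
  also have "\<dots> \<le> qnorm_pow q (A *v h) + (1 + rip_const D A q a) / L powr (q / 2)
      * (real a powr (q / 2 - 1) * qnorm_pow q (restr (UNIV - \<sigma> ` {..<min s ?N}) x))"
    using sum_tail_blocks_le[OF ord q(1) a, of s] \<delta>\<^sub>a L
    by (intro add_left_mono mult_left_mono) (auto simp: u_def)
  finally show ?thesis
    unfolding x_def [symmetric] v_def [symmetric]
    by (rule rescale_powr_bound)
      (use q a L \<delta>\<^sub>k \<delta>\<^sub>a norm_synthesis_le_dagger[OF fr] in auto)
qed

end
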